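(* Let $01234$ be a convex pentagon inscribed in a circle of radius $R$, with vertices in cyclic order and area $A$. Let $$a_0=|23|,\quad a_1=|34|,\quad a_2=|40|,\quad a_3=|01|,\quad a_4=|12|,$$ and let $X=|14|$. Put $p=a_2a_3$, $P=a_0a_1a_4$, $Q=a_0^2+a_1^2+a_4^2$, and $S=(a_0a_1)^2+(a_0a_4)^2+(a_1a_4)^2$. Then $$(4AR-pX)^2=PX^3+SX^2+PQX+P^2.$$
   Context: $|ij|$ denotes the distance between vertices $i$ and $j$. *)

theory Defs
  imports "HOL-Analysis.Analysis"
begin

definition inscribed_convex_pentagon :: "(nat \<Rightarrow> complex) \<Rightarrow> complex \<Rightarrow> real \<Rightarrow> bool" where
  "inscribed_convex_pentagon p c R \<longleftrightarrow> R > 0 \<and>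
     (\<exists>\<theta> :: nat \<Rightarrow> real.
        (\<forall>k<5. p k = c + complex_of_real R * cis (\<theta> k)) \<and>
        ((\<theta> 0 < \<theta> 1 \<and> \<theta> 1 < \<theta> 2 \<and> \<theta> 2 < \<theta> 3 \<and> \<theta> 3 < \<theta> 4 \<and> \<theta> 4 < \<theta> 0 + 2 * pi) \<or>
         (\<theta> 0 > \<theta> 1 \<and> \<theta> 1 > \<theta> 2 \<and> \<theta> 2 > \<theta> 3 \<and> \<theta> 3 > \<theta> 4 \<and> \<theta> 4 > \<theta> 0 - 2 * pi)))"

text \<open>Area of the polygon p 0, ..., p (n-1) by the shoelace formula.\<close>

definition polygon_area :: "nat \<Rightarrow> (nat \<Rightarrow> complex) \<Rightarrow> real" where
  "polygon_area n p = \<bar>\<Sum>k<n. Re (p k) * Im (p (Suc k mod n)) - Re (p (Suc k mod n)) * Im (p k)\<bar> / 2"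

end

theory Submission
  imports Defs
begin

text \<open>Let u, x, y, z be the half-arcs cut off by the sides 01, 12, 23, 34 and w = x + y + z the
  half-arc of the diagonal 14, so that every side and the diagonal is a chord 2R sin(half-arc).
  The diagonal 14 splits the pentagon into the triangle 014, with 4R times its area equal to
  a2 a3 X, and the cyclic quadrilateral 1234; hence 4AR - pX = 8R^3 sin(x+y) sin(y+z) sin(x+z).
  Squaring and rewriting each pairwise product of these three sines by the trigonometric form of
  Ptolemy's theorem gives (a0 a1 + a4 X)(a0 a4 + a1 X)(a1 a4 + a0 X), the classical identity
  (4RK)^2 = (ab + cd)(ac + bd)(ad + bc) for a cyclic quadrilateral, whose expansion is the
  right-hand side. Clockwise pentagons reduce to counterclockwise ones by complex conjugation.\<close>

lemma sum_lessThan_Suc_mod: "(\<Sum>k<n. f (Suc k mod n)) = (\<Sum>k<n. f k)"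
proof (cases n)
  case (Suc m)
  have "(\<Sum>k<Suc m. f (Suc k mod Suc m)) = (\<Sum>k<m. f (Suc k)) + f 0"
    by (simp add: sum.lessThan_Suc)
  also have "\<dots> = (\<Sum>k<Suc m. f k)"
    by (simp only: sum.lessThan_Suc_shift add.commute)
  finally show ?thesis using Suc by simp
qed simp

lemma polygon_area_cnj: "polygon_area n (\<lambda>k. cnj (p k)) = polygon_area n p"
proof -
  have "(\<Sum>k<n. Re (cnj (p k)) * Im (cnj (p (Suc k mod n))) - Re (cnj (p (Suc k mod n))) * Im (cnj (p k)))
      = - (\<Sum>k<n. Re (p k) * Im (p (Suc k mod n)) - Re (p (Suc k mod n)) * Im (p k))"
    by (simp add: sum_negf[symmetric] algebra_simps)
  then show ?thesis
    unfolding polygon_area_def by simp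
qed

lemma polygon_area_on_circle:
  assumes "\<forall>k<n. p k = c + complex_of_real R * cis (\<theta> k)"
  shows "polygon_area n p = R\<^sup>2 * \<bar>\<Sum>k<n. sin (\<theta> (Suc k mod n) - \<theta> k)\<bar> / 2"
proof (cases "n = 0")
  case False
  define g where "g t = R * (Re c * sin t - Im c * cos t)" for t
  have cross: "Re (c + R * cis a) * Im (c + R * cis b) - Re (c + R * cis b) * Im (c + R * cis a)
      = R\<^sup>2 * sin (b - a) + (g b - g a)" for a b
    by (simp add: g_def sin_diff power2_eq_square algebra_simps)
  have "(\<Sum>k<n. Re (p k) * Im (p (Suc k mod n)) - Re (p (Suc k mod n)) * Im (p k))
      = (\<Sum>k<n. R\<^sup>2 * sin (\<theta> (Suc k mod n) - \<theta> k) + (g (\<theta> (Suc k mod n)) - g (\<theta> k)))"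
  proof (rule sum.cong)
    fix k assume "k \<in> {..<n}"
    with assms False have "p k = c + R * cis (\<theta> k)" "p (Suc k mod n) = c + R * cis (\<theta> (Suc k mod n))"
      by simp_all
    then show "Re (p k) * Im (p (Suc k mod n)) - Re (p (Suc k mod n)) * Im (p k)
        = R\<^sup>2 * sin (\<theta> (Suc k mod n) - \<theta> k) + (g (\<theta> (Suc k mod n)) - g (\<theta> k))"
      by (simp only: cross)
  qed simp
  also have "\<dots> = R\<^sup>2 * (\<Sum>k<n. sin (\<theta> (Suc k mod n) - \<theta> k))"
    by (simp add: sum.distrib sum_subtractf sum_distrib_left sum_lessThan_Suc_mod[of "\<lambda>k. g (\<theta> k)"])
  finally show ?thesis
    unfolding polygon_area_def by (simp add: abs_mult)
qed (simp add: polygon_area_def)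

lemma dist_cis_chord:
  assumes "0 \<le> R" and "a \<le> b" and "b \<le> a + 2 * pi"
  shows "dist (c + complex_of_real R * cis a) (c + complex_of_real R * cis b) = 2 * R * sin ((b - a) / 2)"
proof -
  have "cis b = cis ((a + b) / 2) * cis ((b - a) / 2)" "cis a = cis ((a + b) / 2) * cis (- ((b - a) / 2))"
    unfolding cis_mult by (simp_all add: field_simps)
  then have "cis b - cis a = cis ((a + b) / 2) * (cis ((b - a) / 2) - cis (- ((b - a) / 2)))"
    by (simp add: right_diff_distrib)
  also have "cis ((b - a) / 2) - cis (- ((b - a) / 2)) = 2 * \<i> * complex_of_real (sin ((b - a) / 2))"
    by (simp add: complex_eq_iff)
  finally have "norm (cis b - cis a) = 2 * \<bar>sin ((b - a) / 2)\<bar>"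
    by (simp add: norm_mult)
  moreover have "sin ((b - a) / 2) \<ge> 0"
    using assms by (intro sin_ge_zero) simp_all
  moreover have "dist (c + complex_of_real R * cis a) (c + complex_of_real R * cis b) = R * norm (cis b - cis a)"
    using assms(1) by (simp add: dist_norm norm_mult norm_minus_commute flip: right_diff_distrib)
  ultimately show ?thesis
    by simp
qed

lemma sin_double_sum_triangle:
  fixes x y :: real
  shows "sin (2 * x) + sin (2 * y) - sin (2 * (x + y)) = 4 * sin x * sin y * sin (x + y)"
proof -
  have "sin x ^ 2 + cos x ^ 2 = 1" "sin y ^ 2 + cos y ^ 2 = 1"
    by simp_all
  then show ?thesis
    unfolding distrib_left sin_add cos_add sin_double cos_double by algebra
qed

text \<open>Ptolemy's theorem for the cyclic quadrilateral with consecutive half-arcs x, y, z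
  and pi - (x + y + z), in trigonometric form.\<close>

lemma sin_add_mult_sin_add:
  fixes x y z :: real
  shows "sin (x + y) * sin (y + z) = sin x * sin z + sin y * sin (x + y + z)"
proof -
  have "sin x ^ 2 + cos x ^ 2 = 1" "sin y ^ 2 + cos y ^ 2 = 1" "sin z ^ 2 + cos z ^ 2 = 1"
    by simp_all
  then show ?thesis
    unfolding sin_add cos_add by algebra
qed

lemma sin_double_sum_quadrilateral:
  fixes x y z :: real
  shows "sin (2 * x) + sin (2 * y) + sin (2 * z) - sin (2 * (x + y + z))
    = 4 * sin (x + y) * sin (y + z) * sin (x + z)"
proof -
  have "sin (2 * x) + sin (2 * y) + sin (2 * z) - sin (2 * (x + y + z))
      = (sin (2 * x) + sin (2 * y) - sin (2 * (x + y))) + (sin (2 * (x + y)) + sin (2 * z) - sin (2 * (x + y + z)))"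
    by simp
  also have "\<dots> = 4 * sin (x + y) * (sin x * sin y + sin z * sin (x + y + z))"
    unfolding sin_double_sum_triangle by (simp add: algebra_simps)
  also have "sin x * sin y + sin z * sin (x + y + z) = sin (x + z) * sin (y + z)"
    using sin_add_mult_sin_add[of x z y] by (simp add: add_ac)
  finally show ?thesis
    by (simp add: mult_ac)
qed

lemma sin_add_product_square:
  fixes x y z :: real
  defines "w \<equiv> x + y + z"
  shows "(sin (x + y) * sin (y + z) * sin (x + z))\<^sup>2
    = (sin x * sin z + sin y * sin w) * (sin y * sin z + sin x * sin w) * (sin x * sin y + sin z * sin w)"
proof -
  have "sin (x + y) * sin (y + z) = sin x * sin z + sin y * sin w"
    "sin (x + y) * sin (x + z) = sin y * sin z + sin x * sin w"
    "sin (y + z) * sin (x + z) = sin x * sin y + sin z * sin w"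
    using sin_add_mult_sin_add[of x y z] sin_add_mult_sin_add[of y x z] sin_add_mult_sin_add[of y z x]
    by (simp_all add: w_def add_ac mult_ac)
  moreover have "(sin (x + y) * sin (y + z) * sin (x + z))\<^sup>2
      = (sin (x + y) * sin (y + z)) * (sin (x + y) * sin (x + z)) * (sin (y + z) * sin (x + z))"
    by (simp add: power2_eq_square mult_ac)
  ultimately show ?thesis
    by simp
qed

lemma sin_double_sum_pentagon:
  fixes u x y z :: real
  defines "w \<equiv> x + y + z"
  shows "sin (2 * u) + sin (2 * x) + sin (2 * y) + sin (2 * z) - sin (2 * (u + w))
    = 4 * sin u * sin w * sin (u + w) + 4 * sin (x + y) * sin (y + z) * sin (x + z)"
  using sin_double_sum_triangle[of u w] sin_double_sum_quadrilateral[of x y z]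
  by (simp add: w_def)

lemma chord_pentagon_identity:
  fixes R u x y z :: real
  defines "w \<equiv> x + y + z"
  shows "(2 * R ^ 3 * (sin (2 * u) + sin (2 * x) + sin (2 * y) + sin (2 * z) - sin (2 * (u + w)))
      - 2 * R * sin (u + w) * (2 * R * sin u) * (2 * R * sin w))\<^sup>2
    = (2 * R * sin y * (2 * R * sin z) + 2 * R * sin x * (2 * R * sin w))
      * (2 * R * sin y * (2 * R * sin x) + 2 * R * sin z * (2 * R * sin w))
      * (2 * R * sin z * (2 * R * sin x) + 2 * R * sin y * (2 * R * sin w))"
proof -
  define T where "T = sin (x + y) * sin (y + z) * sin (x + z)"
  have T_square: "T\<^sup>2 = (sin x * sin z + sin y * sin w) * (sin y * sin z + sin x * sin w) * (sin x * sin y + sin z * sin w)"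
    unfolding T_def w_def by (rule sin_add_product_square)
  have diff: "2 * R ^ 3 * (sin (2 * u) + sin (2 * x) + sin (2 * y) + sin (2 * z) - sin (2 * (u + w)))
      - 2 * R * sin (u + w) * (2 * R * sin u) * (2 * R * sin w) = 8 * R ^ 3 * T"
    unfolding w_def sin_double_sum_pentagon T_def by (simp add: power3_eq_cube algebra_simps)
  have "(8 * R ^ 3 * T)\<^sup>2 = 64 * R ^ 6 * T\<^sup>2"
    by (simp add: power_mult_distrib flip: power_mult)
  also have "\<dots> = (2 * R * sin y * (2 * R * sin z) + 2 * R * sin x * (2 * R * sin w))
      * (2 * R * sin y * (2 * R * sin x) + 2 * R * sin z * (2 * R * sin w))
      * (2 * R * sin z * (2 * R * sin x) + 2 * R * sin y * (2 * R * sin w))"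
    unfolding T_square by (simp add: algebra_simps eval_nat_numeral)
  finally show ?thesis
    unfolding diff .
qed

lemma ccw_inscribed_pentagon_identity:
  fixes p :: "nat \<Rightarrow> complex" and \<theta> :: "nat \<Rightarrow> real"
  assumes R: "R > 0" and on_circle: "\<forall>k<5. p k = c + complex_of_real R * cis (\<theta> k)"
    and ord: "\<theta> 0 < \<theta> 1" "\<theta> 1 < \<theta> 2" "\<theta> 2 < \<theta> 3" "\<theta> 3 < \<theta> 4" "\<theta> 4 < \<theta> 0 + 2 * pi"
  shows "(4 * polygon_area 5 p * R - dist (p 4) (p 0) * dist (p 0) (p 1) * dist (p 1) (p 4))\<^sup>2
    = (dist (p 2) (p 3) * dist (p 3) (p 4) + dist (p 1) (p 2) * dist (p 1) (p 4))
    * (dist (p 2) (p 3) * dist (p 1) (p 2) + dist (p 3) (p 4) * dist (p 1) (p 4))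
    * (dist (p 3) (p 4) * dist (p 1) (p 2) + dist (p 2) (p 3) * dist (p 1) (p 4))"
proof -
  define u x y z where half_arcs: "u = (\<theta> 1 - \<theta> 0) / 2" "x = (\<theta> 2 - \<theta> 1) / 2"
    "y = (\<theta> 3 - \<theta> 2) / 2" "z = (\<theta> 4 - \<theta> 3) / 2"
  define w where "w = x + y + z"
  define S where "S = sin (2 * u) + sin (2 * x) + sin (2 * y) + sin (2 * z) - sin (2 * (u + w))"
  have arcs: "\<theta> 1 - \<theta> 0 = 2 * u" "\<theta> 2 - \<theta> 1 = 2 * x" "\<theta> 3 - \<theta> 2 = 2 * y" "\<theta> 4 - \<theta> 3 = 2 * z"
    "\<theta> 4 - \<theta> 1 = 2 * w" "\<theta> 4 - \<theta> 0 = 2 * (u + w)" "\<theta> 0 - \<theta> 4 = - (2 * (u + w))"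
    by (simp_all add: half_arcs w_def field_simps)
  have chord: "dist (p i) (p j) = 2 * R * sin ((\<theta> j - \<theta> i) / 2)"
    if "i < 5" "j < 5" "\<theta> i \<le> \<theta> j" "\<theta> j \<le> \<theta> i + 2 * pi" for i j
  proof -
    have "p i = c + R * cis (\<theta> i)" "p j = c + R * cis (\<theta> j)"
      using on_circle that by simp_all
    then show ?thesis
      using R that by (simp only:) (rule dist_cis_chord, simp_all)
  qed
  have sides: "dist (p 0) (p 1) = 2 * R * sin u" "dist (p 1) (p 2) = 2 * R * sin x"
    "dist (p 2) (p 3) = 2 * R * sin y" "dist (p 3) (p 4) = 2 * R * sin z"
    "dist (p 1) (p 4) = 2 * R * sin w" "dist (p 4) (p 0) = 2 * R * sin (u + w)"
    using chord[of 0 1] chord[of 1 2] chord[of 2 3] chord[of 3 4] chord[of 1 4] chord[of 0 4] ord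
    unfolding arcs by (simp_all add: dist_commute add_divide_distrib)
  have sum5: "(\<Sum>k<5. g k) = g 0 + g 1 + g 2 + g 3 + g 4" for g :: "nat \<Rightarrow> real"
    by (simp add: eval_nat_numeral)
  have "(\<Sum>k<5. sin (\<theta> (Suc k mod 5) - \<theta> k))
      = sin (\<theta> 1 - \<theta> 0) + sin (\<theta> 2 - \<theta> 1) + sin (\<theta> 3 - \<theta> 2) + sin (\<theta> 4 - \<theta> 3) + sin (\<theta> 0 - \<theta> 4)"
    unfolding sum5 by (simp add: numeral_2_eq_2)
  also have "\<dots> = S"
    unfolding arcs S_def sin_minus by simp
  finally have "polygon_area 5 p = R\<^sup>2 * \<bar>S\<bar> / 2"
    using polygon_area_on_circle[OF on_circle] by simp
  moreover have "S > 0"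
  proof -
    have "0 < u" "0 < x" "0 < y" "0 < z" "u + w < pi"
      using ord by (simp_all add: half_arcs w_def field_simps)
    then show ?thesis
      unfolding S_def w_def sin_double_sum_pentagon by (auto intro!: add_pos_pos mult_pos_pos sin_gt_zero)
  qed
  ultimately have "4 * polygon_area 5 p * R = 2 * R ^ 3 * S"
    by (simp add: power2_eq_square power3_eq_cube)
  then show ?thesis
    unfolding sides S_def w_def by (simp only: chord_pentagon_identity)
qed

theorem proposition4:
  fixes p :: "nat \<Rightarrow> complex" and c :: complex and R A :: real
    and a0 a1 a2 a3 a4 X pp P Q S :: real
  assumes "inscribed_convex_pentagon p c R"
    and "A = polygon_area 5 p"
    and "a0 = dist (p 2) (p 3)" and "a1 = dist (p 3) (p 4)" and "a2 = dist (p 4) (p 0)"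
    and "a3 = dist (p 0) (p 1)" and "a4 = dist (p 1) (p 2)"
    and "X = dist (p 1) (p 4)"
    and "pp = a2 * a3" and "P = a0 * a1 * a4"
    and "Q = a0^2 + a1^2 + a4^2"
    and "S = (a0 * a1)^2 + (a0 * a4)^2 + (a1 * a4)^2"
  shows "(4 * A * R - pp * X)^2 = P * X^3 + S * X^2 + P * Q * X + P^2"
proof -
  obtain \<theta> where R: "R > 0" and on_circle: "\<forall>k<5. p k = c + complex_of_real R * cis (\<theta> k)"
    and ord: "(\<theta> 0 < \<theta> 1 \<and> \<theta> 1 < \<theta> 2 \<and> \<theta> 2 < \<theta> 3 \<and> \<theta> 3 < \<theta> 4 \<and> \<theta> 4 < \<theta> 0 + 2 * pi) \<or>
      (\<theta> 0 > \<theta> 1 \<and> \<theta> 1 > \<theta> 2 \<and> \<theta> 2 > \<theta> 3 \<and> \<theta> 3 > \<theta> 4 \<and> \<theta> 4 > \<theta> 0 - 2 * pi)"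
    using assms(1) unfolding inscribed_convex_pentagon_def by blast
  have "(4 * A * R - pp * X)\<^sup>2 = (a0 * a1 + a4 * X) * (a0 * a4 + a1 * X) * (a1 * a4 + a0 * X)"
    using ord
  proof
    assume "\<theta> 0 < \<theta> 1 \<and> \<theta> 1 < \<theta> 2 \<and> \<theta> 2 < \<theta> 3 \<and> \<theta> 3 < \<theta> 4 \<and> \<theta> 4 < \<theta> 0 + 2 * pi"
    with ccw_inscribed_pentagon_identity[OF R on_circle] show ?thesis
      unfolding assms(2-9) by simp
  next
    assume cw: "\<theta> 0 > \<theta> 1 \<and> \<theta> 1 > \<theta> 2 \<and> \<theta> 2 > \<theta> 3 \<and> \<theta> 3 > \<theta> 4 \<and> \<theta> 4 > \<theta> 0 - 2 * pi"
    define q where "q = (\<lambda>k. cnj (p k))"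
    have q_on_circle: "\<forall>k<5. q k = cnj c + complex_of_real R * cis (- \<theta> k)"
      using on_circle by (simp add: q_def cis_cnj)
    have "dist (q i) (q j) = dist (p i) (p j)" for i j
      unfolding q_def dist_norm by (metis complex_cnj_diff complex_mod_cnj)
    moreover have "polygon_area 5 q = polygon_area 5 p"
      unfolding q_def by (rule polygon_area_cnj)
    ultimately show ?thesis
      using ccw_inscribed_pentagon_identity[OF R q_on_circle] cw unfolding assms(2-9) by simp
  qed
  also have "\<dots> = P * X^3 + S * X^2 + P * Q * X + P^2"
    unfolding assms(10-12) by (simp add: algebra_simps power2_eq_square power3_eq_cube)
  finally show ?thesis .
qed

end
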